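(* Let $(V,E,\sigma)$ be an influence graph and let $\mu : V \rightarrow \{+,-\}$ be a (partial) vertex labeling. If $W\subseteq V$ is a Minimal Inconsistent Core, then there is an answer set $X$ of the disjunctive logic program $P_D\cup\tau((V,E,\sigma),\mu)$ such that $\{i \mid \mathit{active}(i)\in X\}=W$.
   Context: An influence graph is a triple $(V,E,\sigma)$ where $V$ is a finite set of vertices, $E\subseteq V\times V$ is a set of directed edges (an edge from $j$ to $i$ is written $j\rightarrow i$), and $\sigma : E\rightarrow\{+,-\}$ is a partial labeling of the edges; in addition, some vertices of $V$ are designated as input vertices. Signs are multiplied as numbers ($++=--=+$, $+-=-+=-$). Given a partial vertex labeling $\mu:V\rightarrow\{+,-\}$ and total labelings $\sigma':E\rightarrow\{+,-\}$, $\mu':V\rightarrow\{+,-\}$, the value $\mu'(i)$ is called consistent if there is an edge $j\rightarrow i$ in $E$ with $\mu'(i)=\mu'(j)\sigma'(j,i)$. A subset $W\subseteq V$ is a Minimal Inconsistent Core (MIC) if (1) for all total extensions $\sigma'$ of $\sigma$ and $\mu'$ of $\mu$ there is some non-input vertex $i\in W$ such that $\mu'(i)$ is inconsistent, and (2) for every proper subset $W'\subset W$ there are total extensions $\sigma'$ of $\sigma$ and $\mu'$ of $\mu$ such that $\mu'(i)$ is consistent for every non-input vertex $i\in W'$. Answer set semantics: a disjunctive logic program is a set of rules $a_1;\dots;a_l \leftarrow b_1,\dots,b_m,\mathit{not}\ c_1,\dots,\mathit{not}\ c_n$ (with $l=0$ giving an integrity constraint, whose empty head is false). Rules with (capitalized)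 variables stand for all their ground instances obtained by substituting constants occurring in the program; a built-in comparison such as $S\neq T$ keeps only instances where the substituted constants differ. A conditional literal $\mathit{opposite}(U,V):\mathit{edge}(U,V)$ in a body, for fixed $V=v$, stands for the conjunction of all atoms $\mathit{opposite}(u,v)$ such that $\mathit{edge}(u,v)$ is a fact of the program (the empty conjunction if there is none). For a set $X$ of ground atoms, the reduct $P^X$ consists of $\{a_1,\dots,a_l\}\leftarrow b_1,\dots,b_m$ for each ground rule with $\{c_1,\dots,c_n\}\cap X=\emptyset$; $X$ is an answer set of $P$ if it is a $\subseteq$-minimal model of $P^X$. Here $+$ and $-$ are constants and vertex names are constants. The instance $\tau((V,E,\sigma),\mu)$ is the set of facts: $\mathit{vertex}(i)$ for each $i\in V$; $\mathit{edge}(j,i)$ for each $j\rightarrow i$ in $E$; $\mathit{observedE}(j,i,s)$ whenever $\sigma(j,i)=s$ is defined; $\mathit{observedV}(i,s)$ whenever $\mu(i)=s$ is defined; $\mathit{input}(i)$ for each input vertex $i$. The program $P_D$ consists of the rules $\mathit{labelV}(V,S)\leftarrow \mathit{observedV}(V,S)$; $\mathit{labelE}(U,V,S)\leftarrow \mathit{observedE}(U,V,S)$; $\mathit{active}(V);\mathit{inactive}(V)\leftarrow \mathit{vertex}(V),\mathit{not}\ \mathit{input}(V)$; $\mathit{edgeMIC}(U,V)\leftarrow \mathit{edge}(U,V),\mathit{active}(V)$; $\mathit{vertexMIC}(U)\leftarrow \mathit{edgeMIC}(U,V)$; $\mathit{vertexMIC}(V)\leftarrow \mathit{active}(V)$;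 $\mathit{labelV}(V,+);\mathit{labelV}(V,-)\leftarrow \mathit{vertexMIC}(V)$; $\mathit{labelE}(U,V,+);\mathit{labelE}(U,V,-)\leftarrow \mathit{edgeMIC}(U,V)$; $\mathit{opposite}(U,V)\leftarrow \mathit{labelE}(U,V,-),\mathit{labelV}(U,S),\mathit{labelV}(V,S)$; $\mathit{opposite}(U,V)\leftarrow \mathit{labelE}(U,V,+),\mathit{labelV}(U,S),\mathit{labelV}(V,T),S\neq T$; $\mathit{bottom}\leftarrow \mathit{active}(V),\mathit{opposite}(U,V):\mathit{edge}(U,V)$; $\leftarrow \mathit{not}\ \mathit{bottom}$; $\mathit{labelV}(V,+)\leftarrow \mathit{bottom},\mathit{vertex}(V)$; $\mathit{labelV}(V,-)\leftarrow \mathit{bottom},\mathit{vertex}(V)$; $\mathit{labelE}(U,V,+)\leftarrow \mathit{bottom},\mathit{edge}(U,V)$; $\mathit{labelE}(U,V,-)\leftarrow \mathit{bottom},\mathit{edge}(U,V)$; $\mathit{labelV'}(W,V,+);\mathit{labelV'}(W,V,-)\leftarrow \mathit{active}(W),\mathit{vertexMIC}(V)$; $\mathit{labelE'}(W,U,V,+);\mathit{labelE'}(W,U,V,-)\leftarrow \mathit{active}(W),\mathit{edgeMIC}(U,V)$; $\mathit{labelV'}(W,V,S)\leftarrow \mathit{active}(W),\mathit{observedV}(V,S)$; $\mathit{labelE'}(W,U,V,S)\leftarrow \mathit{active}(W),\mathit{observedE}(U,V,S)$; $\mathit{receive'}(W,V,+)\leftarrow \mathit{labelE'}(W,U,V,S),\mathit{labelV'}(W,U,S),V\neq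 W$; $\mathit{receive'}(W,V,-)\leftarrow \mathit{labelE'}(W,U,V,S),\mathit{labelV'}(W,U,T),V\neq W,S\neq T$; $\leftarrow \mathit{labelV'}(W,V,S),\mathit{active}(V),V\neq W,\mathit{not}\ \mathit{receive'}(W,V,S)$. *)

theory Defs
  imports Main
begin

datatype sign = Pos | Neg

fun smult :: "sign \<Rightarrow> sign \<Rightarrow> sign" where
  "smult Pos s = s"
| "smult Neg Pos = Neg"
| "smult Neg Neg = Pos"

text \<open>An influence graph: finite vertex set V, edges E (a pair (j,i) is the edge j -> i),
  partial edge labeling sigma (defined only on edges), set I of input vertices.\<close>
definition influence_graph ::
  "'v set \<Rightarrow> ('v \<times> 'v) set \<Rightarrow> ('v \<times> 'v \<Rightarrow> sign option) \<Rightarrow> 'v set \<Rightarrow> bool" where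
  "influence_graph V E \<sigma> I \<longleftrightarrow>
     finite V \<and> E \<subseteq> V \<times> V \<and> {e. \<sigma> e \<noteq> None} \<subseteq> E \<and> I \<subseteq> V"

definition vertex_labeling :: "'v set \<Rightarrow> ('v \<Rightarrow> sign option) \<Rightarrow> bool" where
  "vertex_labeling V \<mu> \<longleftrightarrow> {i. \<mu> i \<noteq> None} \<subseteq> V"

definition extendsE :: "('v \<times> 'v) set \<Rightarrow> ('v \<times> 'v \<Rightarrow> sign option) \<Rightarrow> ('v \<times> 'v \<Rightarrow> sign) \<Rightarrow> bool" where
  "extendsE E \<sigma> \<sigma>' \<longleftrightarrow> (\<forall>e\<in>E. \<forall>s. \<sigma> e = Some s \<longrightarrow> \<sigma>' e = s)"

definition extendsV :: "'v set \<Rightarrow> ('v \<Rightarrow> sign option) \<Rightarrow> ('v \<Rightarrow> sign) \<Rightarrow> bool" where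
  "extendsV V \<mu> \<mu>' \<longleftrightarrow> (\<forall>i\<in>V. \<forall>s. \<mu> i = Some s \<longrightarrow> \<mu>' i = s)"

definition consistent :: "('v \<times> 'v) set \<Rightarrow> ('v \<times> 'v \<Rightarrow> sign) \<Rightarrow> ('v \<Rightarrow> sign) \<Rightarrow> 'v \<Rightarrow> bool" where
  "consistent E \<sigma>' \<mu>' i \<longleftrightarrow> (\<exists>j. (j, i) \<in> E \<and> \<mu>' i = smult (\<mu>' j) (\<sigma>' (j, i)))"

definition is_MIC ::
  "'v set \<Rightarrow> ('v \<times> 'v) set \<Rightarrow> ('v \<times> 'v \<Rightarrow> sign option) \<Rightarrow> 'v set \<Rightarrow> ('v \<Rightarrow> sign option)
   \<Rightarrow> 'v set \<Rightarrow> bool" where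
  "is_MIC V E \<sigma> I \<mu> W \<longleftrightarrow>
     W \<subseteq> V \<and>
     (\<forall>\<sigma>' \<mu>'. extendsE E \<sigma> \<sigma>' \<and> extendsV V \<mu> \<mu>' \<longrightarrow>
        (\<exists>i\<in>W. i \<notin> I \<and> \<not> consistent E \<sigma>' \<mu>' i)) \<and>
     (\<forall>W'. W' \<subset> W \<longrightarrow>
        (\<exists>\<sigma>' \<mu>'. extendsE E \<sigma> \<sigma>' \<and> extendsV V \<mu> \<mu>' \<and>
           (\<forall>i\<in>W'. i \<notin> I \<longrightarrow> consistent E \<sigma>' \<mu>' i)))"

text \<open>A ground rule (H, B+, B-) stands for  h1;...;hl <- b1,...,bm, not c1,...,not cn.\<close>
type_synonym 'a rule = "'a set \<times> 'a set \<times> 'a set"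

definition reduct :: "'a rule set \<Rightarrow> 'a set \<Rightarrow> ('a set \<times> 'a set) set" where
  "reduct P X = {(H, Bp) | H Bp Bn. (H, Bp, Bn) \<in> P \<and> Bn \<inter> X = {}}"

definition is_model :: "('a set \<times> 'a set) set \<Rightarrow> 'a set \<Rightarrow> bool" where
  "is_model R X \<longleftrightarrow> (\<forall>(H, B) \<in> R. B \<subseteq> X \<longrightarrow> H \<inter> X \<noteq> {})"

definition answer_set :: "'a rule set \<Rightarrow> 'a set \<Rightarrow> bool" where
  "answer_set P X \<longleftrightarrow> is_model (reduct P X) X \<and> (\<forall>Y. Y \<subset> X \<longrightarrow> \<not> is_model (reduct P X) Y)"

datatype 'v cst = Vx 'v | CPlus | CMinus

fun sc :: "sign \<Rightarrow> 'v cst" where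
  "sc Pos = CPlus" | "sc Neg = CMinus"

datatype 'c atom =
    Vertex 'c | Edge 'c 'c | ObservedE 'c 'c 'c | ObservedV 'c 'c | Input 'c
  | LabelV 'c 'c | LabelE 'c 'c 'c | Active 'c | Inactive 'c
  | EdgeMIC 'c 'c | VertexMIC 'c | Opposite 'c 'c | Bottom
  | LabelV' 'c 'c 'c | LabelE' 'c 'c 'c 'c | Receive' 'c 'c 'c

text \<open>Ground instances of P_D over the set C of constants; F is the set of facts of the
  whole program (needed for the conditional literal opposite(U,V):edge(U,V)).\<close>
definition PD :: "'c set \<Rightarrow> 'c \<Rightarrow> 'c \<Rightarrow> 'c atom set \<Rightarrow> 'c atom rule set" where
  "PD C p m F =
     {({LabelV v s}, {ObservedV v s}, {}) | v s. v \<in> C \<and> s \<in> C}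
   \<union> {({LabelE u v s}, {ObservedE u v s}, {}) | u v s. u \<in> C \<and> v \<in> C \<and> s \<in> C}
   \<union> {({Active v, Inactive v}, {Vertex v}, {Input v}) | v. v \<in> C}
   \<union> {({EdgeMIC u v}, {Edge u v, Active v}, {}) | u v. u \<in> C \<and> v \<in> C}
   \<union> {({VertexMIC u}, {EdgeMIC u v}, {}) | u v. u \<in> C \<and> v \<in> C}
   \<union> {({VertexMIC v}, {Active v}, {}) | v. v \<in> C}
   \<union> {({LabelV v p, LabelV v m}, {VertexMIC v}, {}) | v. v \<in> C}
   \<union> {({LabelE u v p, LabelE u v m}, {EdgeMIC u v}, {}) | u v. u \<in> C \<and> v \<in> C}
   \<union> {({Opposite u v}, {LabelE u v m, LabelV u s, LabelV v s}, {}) | u v s.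
        u \<in> C \<and> v \<in> C \<and> s \<in> C}
   \<union> {({Opposite u v}, {LabelE u v p, LabelV u s, LabelV v t}, {}) | u v s t.
        u \<in> C \<and> v \<in> C \<and> s \<in> C \<and> t \<in> C \<and> s \<noteq> t}
   \<union> {({Bottom}, insert (Active v) {Opposite u v | u. Edge u v \<in> F}, {}) | v. v \<in> C}
   \<union> {({}, {}, {Bottom})}
   \<union> {({LabelV v p}, {Bottom, Vertex v}, {}) | v. v \<in> C}
   \<union> {({LabelV v m}, {Bottom, Vertex v}, {}) | v. v \<in> C}
   \<union> {({LabelE u v p}, {Bottom, Edge u v}, {}) | u v. u \<in> C \<and> v \<in> C}
   \<union> {({LabelE u v m}, {Bottom, Edge u v}, {}) | u v. u \<in> C \<and> v \<in> C}
   \<union> {({LabelV' w v p, LabelV' w v m}, {Active w, VertexMIC v}, {}) | w v. w \<in> C \<and> v \<in> C}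
   \<union> {({LabelE' w u v p, LabelE' w u v m}, {Active w, EdgeMIC u v}, {}) | w u v.
        w \<in> C \<and> u \<in> C \<and> v \<in> C}
   \<union> {({LabelV' w v s}, {Active w, ObservedV v s}, {}) | w v s. w \<in> C \<and> v \<in> C \<and> s \<in> C}
   \<union> {({LabelE' w u v s}, {Active w, ObservedE u v s}, {}) | w u v s.
        w \<in> C \<and> u \<in> C \<and> v \<in> C \<and> s \<in> C}
   \<union> {({Receive' w v p}, {LabelE' w u v s, LabelV' w u s}, {}) | w v u s.
        w \<in> C \<and> v \<in> C \<and> u \<in> C \<and> s \<in> C \<and> v \<noteq> w}
   \<union> {({Receive' w v m}, {LabelE' w u v s, LabelV' w u t}, {}) | w v u s t.
        w \<in> C \<and> v \<in> C \<and> u \<in> C \<and> s \<in> C \<and> t \<in> C \<and> v \<noteq> w \<and> s \<noteq> t}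
   \<union> {({}, {LabelV' w v s, Active v}, {Receive' w v s}) | w v s.
        w \<in> C \<and> v \<in> C \<and> s \<in> C \<and> v \<noteq> w}"

definition tau_facts ::
  "'v set \<Rightarrow> ('v \<times> 'v) set \<Rightarrow> ('v \<times> 'v \<Rightarrow> sign option) \<Rightarrow> 'v set \<Rightarrow> ('v \<Rightarrow> sign option)
   \<Rightarrow> 'v cst atom set" where
  "tau_facts V E \<sigma> I \<mu> =
     {Vertex (Vx i) | i. i \<in> V}
   \<union> {Edge (Vx j) (Vx i) | j i. (j, i) \<in> E}
   \<union> {ObservedE (Vx j) (Vx i) (sc s) | j i s. \<sigma> (j, i) = Some s}
   \<union> {ObservedV (Vx i) (sc s) | i s. \<mu> i = Some s}
   \<union> {Input (Vx i) | i. i \<in> I}"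

definition tau :: "'v set \<Rightarrow> ('v \<times> 'v) set \<Rightarrow> ('v \<times> 'v \<Rightarrow> sign option) \<Rightarrow> 'v set
   \<Rightarrow> ('v \<Rightarrow> sign option) \<Rightarrow> 'v cst atom rule set" where
  "tau V E \<sigma> I \<mu> = {({a}, {}, {}) | a. a \<in> tau_facts V E \<sigma> I \<mu>}"

definition consts_of :: "'v set \<Rightarrow> 'v cst set" where
  "consts_of V = Vx ` V \<union> {CPlus, CMinus}"

definition program :: "'v set \<Rightarrow> ('v \<times> 'v) set \<Rightarrow> ('v \<times> 'v \<Rightarrow> sign option) \<Rightarrow> 'v set
   \<Rightarrow> ('v \<Rightarrow> sign option) \<Rightarrow> 'v cst atom rule set" where
  "program V E \<sigma> I \<mu> =
     PD (consts_of V) CPlus CMinus (tau_facts V E \<sigma> I \<mu>) \<union> tau V E \<sigma> I \<mu>"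

end

theory Submission
  imports Defs
begin

text \<open>The answer set is the saturated interpretation: Bottom together with every label of every
  vertex and edge, plus, for each active vertex w of the core W, the primed labels of a total
  labeling that is consistent on W except at w. Such labelings exist by the minimality of W, and
  they are exactly what makes the receive' constraints hold. Minimality of the interpretation
  comes from the inconsistency of W: in any smaller model, the labels it chooses form a total
  extension of the observations, which must be inconsistent at some active vertex; the opposite
  atoms of all its incoming edges then derive Bottom, and Bottom re-derives everything.\<close>

lemma sc_eq_iff [simp]: "sc a = sc b \<longleftrightarrow> a = b"
  by (cases a; cases b) auto

lemma sc_neq_Vx [simp]: "sc a \<noteq> Vx v" "Vx v \<noteq> sc a"
  by (cases a; simp)+

lemma sc_eq_CPlus_iff [simp]: "sc a = CPlus \<longleftrightarrow> a = Pos" "CPlus = sc a \<longleftrightarrow> a = Pos"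
  by (cases a; simp)+

lemma sc_eq_CMinus_iff [simp]: "sc a = CMinus \<longleftrightarrow> a = Neg" "CMinus = sc a \<longleftrightarrow> a = Neg"
  by (cases a; simp)+

lemma sc_in_signs: "sc a \<in> {CPlus, CMinus}"
  by (cases a) auto

lemma sign_neq_Pos_iff [simp]: "a \<noteq> Pos \<longleftrightarrow> a = Neg"
  by (cases a) auto

lemma sign_neq_Neg_iff [simp]: "a \<noteq> Neg \<longleftrightarrow> a = Pos"
  by (cases a) auto

lemma smult_Pos_right [simp]: "smult a Pos = a"
  by (cases a) auto

lemma smult_Neg_right [simp]: "smult a Neg = (if a = Pos then Neg else Pos)"
  by (cases a) auto

lemma smult_self [simp]: "smult a a = Pos"
  by (cases a) auto

lemma smult_neq: "a \<noteq> b \<Longrightarrow> smult a b = Neg"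
  by (cases a; cases b) auto

lemma smult_eq_Neg_iff: "smult a b = Neg \<longleftrightarrow> b \<noteq> a"
  by (cases a; cases b) auto

lemma smult_eq_Pos_iff: "smult a b = Pos \<longleftrightarrow> a = b"
  by (cases a; cases b) auto

lemma is_model_reductI:
  assumes "\<And>H Bp Bn. (H, Bp, Bn) \<in> P \<Longrightarrow> Bn \<inter> X = {} \<Longrightarrow> Bp \<subseteq> X \<Longrightarrow> H \<inter> X \<noteq> {}"
  shows "is_model (reduct P X) X"
  using assms unfolding is_model_def reduct_def by fastforce

lemma is_model_reductD:
  assumes "is_model (reduct P X) Y" and "(H, Bp, Bn) \<in> P" and "Bn \<inter> X = {}" and "Bp \<subseteq> Y"
  shows "\<exists>a\<in>H. a \<in> Y"
proof -
  have "(H, Bp) \<in> reduct P X"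
    using assms(2,3) unfolding reduct_def by blast
  then show ?thesis
    using assms(1,4) unfolding is_model_def by fastforce
qed

lemma answer_setI:
  assumes "is_model (reduct P X) X"
    and "\<And>Y. is_model (reduct P X) Y \<Longrightarrow> Y \<subseteq> X \<Longrightarrow> X \<subseteq> Y"
  shows "answer_set P X"
  using assms unfolding answer_set_def by blast

lemma PD_LabelV_observed: "v \<in> C \<Longrightarrow> s \<in> C \<Longrightarrow> ({LabelV v s}, {ObservedV v s}, {}) \<in> PD C p m F"
  by (simp add: PD_def; blast)

lemma PD_LabelE_observed:
  "u \<in> C \<Longrightarrow> v \<in> C \<Longrightarrow> s \<in> C \<Longrightarrow> ({LabelE u v s}, {ObservedE u v s}, {}) \<in> PD C p m F"
  by (simp add: PD_def; blast)

lemma PD_Active_or_Inactive: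
  "v \<in> C \<Longrightarrow> ({Active v, Inactive v}, {Vertex v}, {Input v}) \<in> PD C p m F"
  by (simp add: PD_def; blast)

lemma PD_EdgeMIC: "u \<in> C \<Longrightarrow> v \<in> C \<Longrightarrow> ({EdgeMIC u v}, {Edge u v, Active v}, {}) \<in> PD C p m F"
  by (simp add: PD_def; blast)

lemma PD_VertexMIC_EdgeMIC: "u \<in> C \<Longrightarrow> v \<in> C \<Longrightarrow> ({VertexMIC u}, {EdgeMIC u v}, {}) \<in> PD C p m F"
  by (simp add: PD_def; blast)

lemma PD_VertexMIC_Active: "v \<in> C \<Longrightarrow> ({VertexMIC v}, {Active v}, {}) \<in> PD C p m F"
  by (simp add: PD_def; blast)

lemma PD_LabelV_choice: "v \<in> C \<Longrightarrow> ({LabelV v p, LabelV v m}, {VertexMIC v}, {}) \<in> PD C p m F"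
  by (simp add: PD_def; blast)

lemma PD_LabelE_choice:
  "u \<in> C \<Longrightarrow> v \<in> C \<Longrightarrow> ({LabelE u v p, LabelE u v m}, {EdgeMIC u v}, {}) \<in> PD C p m F"
  by (simp add: PD_def; blast)

lemma PD_Opposite_minus: "u \<in> C \<Longrightarrow> v \<in> C \<Longrightarrow> s \<in> C \<Longrightarrow>
    ({Opposite u v}, {LabelE u v m, LabelV u s, LabelV v s}, {}) \<in> PD C p m F"
  by (simp add: PD_def; blast)

lemma PD_Opposite_plus: "u \<in> C \<Longrightarrow> v \<in> C \<Longrightarrow> s \<in> C \<Longrightarrow> t \<in> C \<Longrightarrow> s \<noteq> t \<Longrightarrow>
    ({Opposite u v}, {LabelE u v p, LabelV u s, LabelV v t}, {}) \<in> PD C p m F"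
  by (simp add: PD_def; blast)

lemma PD_Bottom:
  "v \<in> C \<Longrightarrow> ({Bottom}, insert (Active v) {Opposite u v | u. Edge u v \<in> F}, {}) \<in> PD C p m F"
  by (simp add: PD_def; blast)

lemma PD_LabelV_saturate:
  "v \<in> C \<Longrightarrow> s \<in> {p, m} \<Longrightarrow> ({LabelV v s}, {Bottom, Vertex v}, {}) \<in> PD C p m F"
  by (simp add: PD_def; blast)

lemma PD_LabelE_saturate:
  "u \<in> C \<Longrightarrow> v \<in> C \<Longrightarrow> s \<in> {p, m} \<Longrightarrow> ({LabelE u v s}, {Bottom, Edge u v}, {}) \<in> PD C p m F"
  by (simp add: PD_def; blast)

lemma PD_LabelV'_choice: "w \<in> C \<Longrightarrow> v \<in> C \<Longrightarrow>
    ({LabelV' w v p, LabelV' w v m}, {Active w, VertexMIC v}, {}) \<in> PD C p m F"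
  by (simp add: PD_def; blast)

lemma PD_LabelE'_choice: "w \<in> C \<Longrightarrow> u \<in> C \<Longrightarrow> v \<in> C \<Longrightarrow>
    ({LabelE' w u v p, LabelE' w u v m}, {Active w, EdgeMIC u v}, {}) \<in> PD C p m F"
  by (simp add: PD_def; blast)

lemma PD_LabelV'_observed: "w \<in> C \<Longrightarrow> v \<in> C \<Longrightarrow> s \<in> C \<Longrightarrow>
    ({LabelV' w v s}, {Active w, ObservedV v s}, {}) \<in> PD C p m F"
  by (simp add: PD_def; blast)

lemma PD_LabelE'_observed: "w \<in> C \<Longrightarrow> u \<in> C \<Longrightarrow> v \<in> C \<Longrightarrow> s \<in> C \<Longrightarrow>
    ({LabelE' w u v s}, {Active w, ObservedE u v s}, {}) \<in> PD C p m F"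
  by (simp add: PD_def; blast)

lemma PD_Receive'_plus: "w \<in> C \<Longrightarrow> u \<in> C \<Longrightarrow> v \<in> C \<Longrightarrow> s \<in> C \<Longrightarrow> v \<noteq> w \<Longrightarrow>
    ({Receive' w v p}, {LabelE' w u v s, LabelV' w u s}, {}) \<in> PD C p m F"
  by (simp add: PD_def; blast)

lemma PD_Receive'_minus: "w \<in> C \<Longrightarrow> u \<in> C \<Longrightarrow> v \<in> C \<Longrightarrow> s \<in> C \<Longrightarrow> t \<in> C \<Longrightarrow> v \<noteq> w \<Longrightarrow>
    s \<noteq> t \<Longrightarrow> ({Receive' w v m}, {LabelE' w u v s, LabelV' w u t}, {}) \<in> PD C p m F"
  by (simp add: PD_def; blast)

lemma consts_of_simps [simp]:
  "Vx i \<in> consts_of V \<longleftrightarrow> i \<in> V" "CPlus \<in> consts_of V" "CMinus \<in> consts_of V" "sc s \<in> consts_of V"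
  using sc_in_signs[of s] unfolding consts_of_def by auto

lemma tau_facts_Edge_iff:
  "Edge a b \<in> tau_facts V E \<sigma> I \<mu> \<longleftrightarrow> (\<exists>j i. (j, i) \<in> E \<and> a = Vx j \<and> b = Vx i)"
  unfolding tau_facts_def by auto

section \<open>Minimal inconsistent cores\<close>

lemma is_MIC_inconsistentD:
  assumes "is_MIC V E \<sigma> I \<mu> W" and "extendsE E \<sigma> \<sigma>'" and "extendsV V \<mu> \<mu>'"
  shows "\<exists>i\<in>W. i \<notin> I \<and> \<not> consistent E \<sigma>' \<mu>' i"
proof -
  have "\<forall>\<sigma>' \<mu>'. extendsE E \<sigma> \<sigma>' \<and> extendsV V \<mu> \<mu>' \<longrightarrow> (\<exists>i\<in>W. i \<notin> I \<and> \<not> consistent E \<sigma>' \<mu>' i)"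
    using assms(1) unfolding is_MIC_def by (elim conjE)
  then show ?thesis
    using assms(2,3) by blast
qed

lemma is_MIC_minimalD:
  "is_MIC V E \<sigma> I \<mu> W \<Longrightarrow> W' \<subset> W \<Longrightarrow>
    \<exists>\<sigma>' \<mu>'. extendsE E \<sigma> \<sigma>' \<and> extendsV V \<mu> \<mu>' \<and> (\<forall>i\<in>W'. i \<notin> I \<longrightarrow> consistent E \<sigma>' \<mu>' i)"
  unfolding is_MIC_def by (elim conjE) blast

lemma is_MIC_not_input:
  assumes mic: "is_MIC V E \<sigma> I \<mu> W" and "i \<in> W"
  shows "i \<notin> I"
proof
  assume "i \<in> I"
  obtain \<sigma>' \<mu>' where ext: "extendsE E \<sigma> \<sigma>'" "extendsV V \<mu> \<mu>'"
    and cons: "\<forall>j\<in>W - {i}. j \<notin> I \<longrightarrow> consistent E \<sigma>' \<mu>' j"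
    using is_MIC_minimalD[OF mic, of "W - {i}"] \<open>i \<in> W\<close> by blast
  obtain j where j: "j \<in> W" "j \<notin> I" "\<not> consistent E \<sigma>' \<mu>' j"
    using is_MIC_inconsistentD[OF mic ext] by blast
  then have "j \<in> W - {i}"
    using \<open>i \<in> I\<close> by auto
  then show False
    using cons j by simp
qed

lemma is_MIC_witnesses:
  assumes mic: "is_MIC V E \<sigma> I \<mu> W"
  shows "\<exists>\<sigma>w \<mu>w. \<forall>w\<in>W. extendsE E \<sigma> (\<sigma>w w) \<and> extendsV V \<mu> (\<mu>w w) \<and>
           (\<forall>i\<in>W - {w}. consistent E (\<sigma>w w) (\<mu>w w) i)"
proof -
  have "\<forall>w\<in>W. \<exists>p. extendsE E \<sigma> (fst p) \<and> extendsV V \<mu> (snd p) \<and>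
          (\<forall>i\<in>W - {w}. consistent E (fst p) (snd p) i)"
  proof
    fix w assume "w \<in> W"
    obtain \<sigma>' \<mu>' where ext: "extendsE E \<sigma> \<sigma>'" "extendsV V \<mu> \<mu>'"
      and cons: "\<forall>i\<in>W - {w}. i \<notin> I \<longrightarrow> consistent E \<sigma>' \<mu>' i"
      using is_MIC_minimalD[OF mic, of "W - {w}"] \<open>w \<in> W\<close> by blast
    have "\<forall>i\<in>W - {w}. consistent E \<sigma>' \<mu>' i"
      using cons is_MIC_not_input[OF mic] by blast
    with ext show "\<exists>p. extendsE E \<sigma> (fst p) \<and> extendsV V \<mu> (snd p) \<and>
          (\<forall>i\<in>W - {w}. consistent E (fst p) (snd p) i)"
      by (intro exI[of _ "(\<sigma>', \<mu>')"]) simp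
  qed
  then obtain f where "\<forall>w\<in>W. extendsE E \<sigma> (fst (f w)) \<and> extendsV V \<mu> (snd (f w)) \<and>
      (\<forall>i\<in>W - {w}. consistent E (fst (f w)) (snd (f w)) i)"
    by (elim bchoice[THEN exE])
  then show ?thesis
    by (intro exI[of _ "fst \<circ> f"] exI[of _ "snd \<circ> f"]) simp
qed

definition vertex_labels_in :: "('v \<Rightarrow> sign option) \<Rightarrow> 'v cst atom set \<Rightarrow> 'v \<Rightarrow> sign" where
  "vertex_labels_in \<mu> Y i =
     (case \<mu> i of Some s \<Rightarrow> s | None \<Rightarrow> if LabelV (Vx i) CPlus \<in> Y then Pos else Neg)"

definition edge_labels_in :: "('v \<times> 'v \<Rightarrow> sign option) \<Rightarrow> 'v cst atom set \<Rightarrow> 'v \<times> 'v \<Rightarrow> sign" where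
  "edge_labels_in \<sigma> Y e =
     (case \<sigma> e of Some s \<Rightarrow> s | None \<Rightarrow> if LabelE (Vx (fst e)) (Vx (snd e)) CPlus \<in> Y then Pos else Neg)"

lemma extendsV_vertex_labels_in: "extendsV V \<mu> (vertex_labels_in \<mu> Y)"
  unfolding extendsV_def vertex_labels_in_def by auto

lemma extendsE_edge_labels_in: "extendsE E \<sigma> (edge_labels_in \<sigma> Y)"
  unfolding extendsE_def edge_labels_in_def by auto

section \<open>The answer set of a minimal inconsistent core\<close>

locale witnessed_core =
  fixes V :: "'v set" and E :: "('v \<times> 'v) set" and \<sigma> :: "'v \<times> 'v \<Rightarrow> sign option"
    and I :: "'v set" and \<mu> :: "'v \<Rightarrow> sign option" and W :: "'v set"
    and \<sigma>w :: "'v \<Rightarrow> 'v \<times> 'v \<Rightarrow> sign" and \<mu>w :: "'v \<Rightarrow> 'v \<Rightarrow> sign"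
  assumes graph: "influence_graph V E \<sigma> I"
    and labeling: "vertex_labeling V \<mu>"
    and core_subset: "W \<subseteq> V"
    and core_not_input: "i \<in> W \<Longrightarrow> i \<notin> I"
    and core_inconsistent:
      "extendsE E \<sigma> \<sigma>' \<Longrightarrow> extendsV V \<mu> \<mu>' \<Longrightarrow> \<exists>i\<in>W. \<not> consistent E \<sigma>' \<mu>' i"
    and witness_extendsE: "w \<in> W \<Longrightarrow> extendsE E \<sigma> (\<sigma>w w)"
    and witness_extendsV: "w \<in> W \<Longrightarrow> extendsV V \<mu> (\<mu>w w)"
    and witness_consistent: "w \<in> W \<Longrightarrow> i \<in> W \<Longrightarrow> i \<noteq> w \<Longrightarrow> consistent E (\<sigma>w w) (\<mu>w w) i"
begin

lemma edge_vertices: "(u, v) \<in> E \<Longrightarrow> u \<in> V \<and> v \<in> V"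
  using graph unfolding influence_graph_def by auto

lemma observed_edge: "\<sigma> e = Some s \<Longrightarrow> e \<in> E"
  using graph unfolding influence_graph_def by auto

lemma observed_edge': "\<sigma> e \<noteq> None \<Longrightarrow> e \<in> E"
  using observed_edge by blast

lemma observed_vertex: "\<mu> i = Some s \<Longrightarrow> i \<in> V"
  using labeling unfolding vertex_labeling_def by auto

lemma core_vertex: "i \<in> W \<Longrightarrow> i \<in> V"
  using core_subset by auto

lemma witness_observedV: "w \<in> W \<Longrightarrow> \<mu> v = Some s \<Longrightarrow> \<mu>w w v = s"
  using witness_extendsV observed_vertex unfolding extendsV_def by blast

lemma witness_observedE: "w \<in> W \<Longrightarrow> \<sigma> e = Some s \<Longrightarrow> \<sigma>w w e = s"
  using witness_extendsE observed_edge unfolding extendsE_def by blast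

definition core_vertices :: "'v set" where
  "core_vertices = W \<union> {u. \<exists>v\<in>W. (u, v) \<in> E}"

text \<open>The vertices and edges that carry labelV' and labelE' atoms.\<close>

definition primed_vertex :: "'v \<Rightarrow> bool" where
  "primed_vertex v \<longleftrightarrow> v \<in> core_vertices \<or> \<mu> v \<noteq> None"

definition primed_edge :: "'v \<times> 'v \<Rightarrow> bool" where
  "primed_edge e \<longleftrightarrow> (e \<in> E \<and> snd e \<in> W) \<or> \<sigma> e \<noteq> None"

lemma core_vertices_memI: "v \<in> W \<Longrightarrow> v \<in> core_vertices" "(u, v) \<in> E \<Longrightarrow> v \<in> W \<Longrightarrow> u \<in> core_vertices"
  unfolding core_vertices_def by auto

lemma primed_vertexI: "v \<in> core_vertices \<Longrightarrow> primed_vertex v" "\<mu> v = Some s \<Longrightarrow> primed_vertex v"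
  unfolding primed_vertex_def by auto

lemma primed_edgeI: "(u, v) \<in> E \<Longrightarrow> v \<in> W \<Longrightarrow> primed_edge (u, v)" "\<sigma> e = Some s \<Longrightarrow> primed_edge e"
  unfolding primed_edge_def by auto

lemma core_vertices_vertex: "u \<in> core_vertices \<Longrightarrow> u \<in> V"
  using core_subset edge_vertices unfolding core_vertices_def by auto

lemma primed_edge_vertices: "primed_edge (u, v) \<Longrightarrow> u \<in> V \<and> v \<in> V"
  unfolding primed_edge_def using edge_vertices observed_edge by fastforce

definition core_answer :: "'v cst atom set" where
  "core_answer =
     tau_facts V E \<sigma> I \<mu>
   \<union> {Active (Vx i) | i. i \<in> W}
   \<union> {Inactive (Vx i) | i. i \<in> V - I - W}
   \<union> {EdgeMIC (Vx u) (Vx v) | u v. (u, v) \<in> E \<and> v \<in> W}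
   \<union> {VertexMIC (Vx u) | u. u \<in> core_vertices}
   \<union> {Bottom}
   \<union> {LabelV (Vx v) s | v s. v \<in> V \<and> s \<in> {CPlus, CMinus}}
   \<union> {LabelE (Vx u) (Vx v) s | u v s. (u, v) \<in> E \<and> s \<in> {CPlus, CMinus}}
   \<union> {Opposite (Vx u) (Vx v) | u v. (u, v) \<in> E}
   \<union> {LabelV' (Vx w) (Vx v) (sc (\<mu>w w v)) | w v. w \<in> W \<and> primed_vertex v}
   \<union> {LabelE' (Vx w) (Vx u) (Vx v) (sc (\<sigma>w w (u, v))) | w u v. w \<in> W \<and> primed_edge (u, v)}
   \<union> {Receive' (Vx w) (Vx v) (sc (smult (\<mu>w w u) (\<sigma>w w (u, v)))) | w u v.
        w \<in> W \<and> v \<noteq> w \<and> primed_edge (u, v) \<and> primed_vertex u}"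

lemma core_answer_simps:
  "Vertex c \<in> core_answer \<longleftrightarrow> (\<exists>i\<in>V. c = Vx i)"
  "Edge a b \<in> core_answer \<longleftrightarrow> (\<exists>j i. (j, i) \<in> E \<and> a = Vx j \<and> b = Vx i)"
  "ObservedE a b c \<in> core_answer \<longleftrightarrow>
     (\<exists>j i s. \<sigma> (j, i) = Some s \<and> a = Vx j \<and> b = Vx i \<and> c = sc s)"
  "ObservedV a c \<in> core_answer \<longleftrightarrow> (\<exists>i s. \<mu> i = Some s \<and> a = Vx i \<and> c = sc s)"
  "Input c \<in> core_answer \<longleftrightarrow> (\<exists>i\<in>I. c = Vx i)"
  "Active c \<in> core_answer \<longleftrightarrow> (\<exists>i\<in>W. c = Vx i)"
  "Inactive c \<in> core_answer \<longleftrightarrow> (\<exists>i\<in>V - I - W. c = Vx i)"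
  "EdgeMIC a b \<in> core_answer \<longleftrightarrow> (\<exists>u v. (u, v) \<in> E \<and> v \<in> W \<and> a = Vx u \<and> b = Vx v)"
  "VertexMIC c \<in> core_answer \<longleftrightarrow> (\<exists>i\<in>core_vertices. c = Vx i)"
  "Bottom \<in> core_answer"
  "LabelV a s \<in> core_answer \<longleftrightarrow> (\<exists>v\<in>V. a = Vx v) \<and> s \<in> {CPlus, CMinus}"
  "LabelE a b s \<in> core_answer \<longleftrightarrow>
     (\<exists>u v. (u, v) \<in> E \<and> a = Vx u \<and> b = Vx v) \<and> s \<in> {CPlus, CMinus}"
  "Opposite a b \<in> core_answer \<longleftrightarrow> (\<exists>u v. (u, v) \<in> E \<and> a = Vx u \<and> b = Vx v)"
  "LabelV' a b s \<in> core_answer \<longleftrightarrow>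
     (\<exists>w v. w \<in> W \<and> primed_vertex v \<and> a = Vx w \<and> b = Vx v \<and> s = sc (\<mu>w w v))"
  "LabelE' a b c s \<in> core_answer \<longleftrightarrow>
     (\<exists>w u v. w \<in> W \<and> primed_edge (u, v) \<and> a = Vx w \<and> b = Vx u \<and> c = Vx v
        \<and> s = sc (\<sigma>w w (u, v)))"
  "Receive' a b s \<in> core_answer \<longleftrightarrow>
     (\<exists>w u v. w \<in> W \<and> v \<noteq> w \<and> primed_edge (u, v) \<and> primed_vertex u \<and> a = Vx w \<and> b = Vx v
        \<and> s = sc (smult (\<mu>w w u) (\<sigma>w w (u, v))))"
  unfolding core_answer_def tau_facts_def by auto

lemma Active_core_answer: "{c. Active c \<in> core_answer} = Vx ` W"
  unfolding core_answer_simps by auto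

lemma tau_facts_subset_core_answer: "tau_facts V E \<sigma> I \<mu> \<subseteq> core_answer"
  unfolding core_answer_def by blast

lemma witness_predecessor:
  assumes "w \<in> W" and "v \<in> W" and "v \<noteq> w"
  shows "\<exists>u. primed_edge (u, v) \<and> primed_vertex u \<and> \<mu>w w v = smult (\<mu>w w u) (\<sigma>w w (u, v))"
proof -
  obtain u where "(u, v) \<in> E" and "\<mu>w w v = smult (\<mu>w w u) (\<sigma>w w (u, v))"
    using witness_consistent[OF assms] unfolding consistent_def by blast
  then show ?thesis
    using \<open>v \<in> W\<close> by (blast intro: primed_edgeI primed_vertexI core_vertices_memI)
qed

lemma core_answer_model: "is_model (reduct (program V E \<sigma> I \<mu>) core_answer) core_answer"
proof (rule is_model_reductI)
  fix H Bp Bn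
  assume "(H, Bp, Bn) \<in> program V E \<sigma> I \<mu>" "Bn \<inter> core_answer = {}" "Bp \<subseteq> core_answer"
  then show "H \<inter> core_answer \<noteq> {}"
    unfolding program_def PD_def tau_def
    apply (elim UnE; clarsimp simp: core_answer_simps witness_observedV witness_observedE
        core_vertices_memI primed_vertexI primed_edgeI observed_edge' smult_eq_Pos_iff smult_eq_Neg_iff)
    by (blast intro: core_vertices_memI primed_vertexI primed_edgeI tau_facts_subset_core_answer[THEN subsetD]
        dest: observed_edge witness_predecessor)+
qed

context
  fixes Y :: "'v cst atom set"
  assumes Y_model: "is_model (reduct (program V E \<sigma> I \<mu>) core_answer) Y"
    and Y_subset: "Y \<subseteq> core_answer"
begin

lemma fire_rule:
  assumes "(H, Bp, Bn) \<in> PD (consts_of V) CPlus CMinus (tau_facts V E \<sigma> I \<mu>)"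
    and "Bn \<inter> core_answer = {}" and "Bp \<subseteq> Y"
  shows "\<exists>a\<in>H. a \<in> Y"
  using is_model_reductD[OF Y_model _ assms(2,3)] assms(1) unfolding program_def by blast

lemma tau_facts_in_Y: "a \<in> tau_facts V E \<sigma> I \<mu> \<Longrightarrow> a \<in> Y"
  using is_model_reductD[OF Y_model, of "{a}" "{}" "{}"] unfolding program_def tau_def by blast

lemma facts_in_Y:
  "i \<in> V \<Longrightarrow> Vertex (Vx i) \<in> Y"
  "(j, i) \<in> E \<Longrightarrow> Edge (Vx j) (Vx i) \<in> Y"
  "\<sigma> (j, i) = Some s \<Longrightarrow> ObservedE (Vx j) (Vx i) (sc s) \<in> Y"
  "\<mu> i = Some s \<Longrightarrow> ObservedV (Vx i) (sc s) \<in> Y"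
  by (rule tau_facts_in_Y, simp add: tau_facts_def)+

lemma Active_or_Inactive_in_Y:
  assumes "i \<in> V" and "i \<notin> I"
  shows "Active (Vx i) \<in> Y \<or> Inactive (Vx i) \<in> Y"
proof -
  have "{Input (Vx i)} \<inter> core_answer = {}"
    using assms(2) by (simp add: core_answer_simps)
  with assms(1) show ?thesis
    using fire_rule[OF PD_Active_or_Inactive[where v = "Vx i"]] facts_in_Y(1) by simp
qed

lemma Active_in_Y: "i \<in> W \<Longrightarrow> Active (Vx i) \<in> Y"
  using Active_or_Inactive_in_Y[of i] core_vertex core_not_input Y_subset
  by (auto simp: core_answer_simps)

lemma Inactive_in_Y: "i \<in> V - I - W \<Longrightarrow> Inactive (Vx i) \<in> Y"
  using Active_or_Inactive_in_Y[of i] Y_subset by (auto simp: core_answer_simps)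

lemma EdgeMIC_in_Y: "(u, v) \<in> E \<Longrightarrow> v \<in> W \<Longrightarrow> EdgeMIC (Vx u) (Vx v) \<in> Y"
  using fire_rule[OF PD_EdgeMIC[where u = "Vx u" and v = "Vx v"]] edge_vertices[of u v]
    facts_in_Y(2) Active_in_Y by simp

lemma VertexMIC_in_Y:
  assumes "u \<in> core_vertices"
  shows "VertexMIC (Vx u) \<in> Y"
proof (cases "u \<in> W")
  case True
  then show ?thesis
    using fire_rule[OF PD_VertexMIC_Active[where v = "Vx u"]] core_vertex Active_in_Y by simp
next
  case False
  then obtain v where "(u, v) \<in> E" "v \<in> W"
    using assms unfolding core_vertices_def by auto
  then show ?thesis
    using fire_rule[OF PD_VertexMIC_EdgeMIC[where u = "Vx u" and v = "Vx v"]] edge_vertices[of u v]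
      EdgeMIC_in_Y by simp
qed

lemma LabelV'_in_Y:
  assumes "w \<in> W" and "primed_vertex v"
  shows "LabelV' (Vx w) (Vx v) (sc (\<mu>w w v)) \<in> Y"
proof (cases "\<mu> v")
  case None
  then have "v \<in> core_vertices"
    using assms(2) unfolding primed_vertex_def by simp
  then obtain c where "c \<in> {CPlus, CMinus}" and c: "LabelV' (Vx w) (Vx v) c \<in> Y"
    using fire_rule[OF PD_LabelV'_choice[where w = "Vx w" and v = "Vx v"]] assms(1)
      core_vertex core_vertices_vertex Active_in_Y VertexMIC_in_Y by auto
  moreover have "c = sc (\<mu>w w v)"
    using c Y_subset by (auto simp: core_answer_simps)
  ultimately show ?thesis
    by simp
next
  case (Some s)
  then show ?thesis
    using fire_rule[OF PD_LabelV'_observed[where w = "Vx w" and v = "Vx v" and s = "sc s"]] assms(1)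
      core_vertex observed_vertex Active_in_Y facts_in_Y(4) witness_observedV by simp
qed

lemma LabelE'_in_Y:
  assumes "w \<in> W" and "primed_edge (u, v)"
  shows "LabelE' (Vx w) (Vx u) (Vx v) (sc (\<sigma>w w (u, v))) \<in> Y"
proof (cases "\<sigma> (u, v)")
  case None
  then have "(u, v) \<in> E" "v \<in> W"
    using assms(2) unfolding primed_edge_def by simp_all
  then obtain c where "c \<in> {CPlus, CMinus}" and c: "LabelE' (Vx w) (Vx u) (Vx v) c \<in> Y"
    using fire_rule[OF PD_LabelE'_choice[where w = "Vx w" and u = "Vx u" and v = "Vx v"]] assms(1)
      core_vertex edge_vertices[of u v] Active_in_Y EdgeMIC_in_Y by auto
  moreover have "c = sc (\<sigma>w w (u, v))"
    using c Y_subset by (auto simp: core_answer_simps)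
  ultimately show ?thesis
    by simp
next
  case (Some s)
  then show ?thesis
    using fire_rule[OF PD_LabelE'_observed[where w = "Vx w" and u = "Vx u" and v = "Vx v" and s = "sc s"]]
      assms(1) core_vertex edge_vertices[of u v] observed_edge Active_in_Y facts_in_Y(3) witness_observedE
    by simp
qed

lemma Receive'_in_Y:
  assumes "w \<in> W" and "v \<noteq> w" and "primed_edge (u, v)" and "primed_vertex u"
  shows "Receive' (Vx w) (Vx v) (sc (smult (\<mu>w w u) (\<sigma>w w (u, v)))) \<in> Y"
proof -
  have labels: "LabelE' (Vx w) (Vx u) (Vx v) (sc (\<sigma>w w (u, v))) \<in> Y"
    "LabelV' (Vx w) (Vx u) (sc (\<mu>w w u)) \<in> Y"
    using assms LabelE'_in_Y LabelV'_in_Y by simp_all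
  have vertices: "w \<in> V" "u \<in> V" "v \<in> V"
    using assms core_vertex primed_edge_vertices by simp_all
  show ?thesis
  proof (cases "\<mu>w w u = \<sigma>w w (u, v)")
    case True
    then show ?thesis
      using fire_rule[OF PD_Receive'_plus[where w = "Vx w" and u = "Vx u" and v = "Vx v"
            and s = "sc (\<sigma>w w (u, v))"]] vertices labels assms(2) by simp
  next
    case False
    then show ?thesis
      using fire_rule[OF PD_Receive'_minus[where w = "Vx w" and u = "Vx u" and v = "Vx v"
            and s = "sc (\<sigma>w w (u, v))" and t = "sc (\<mu>w w u)"]] vertices labels assms(2)
      by (simp add: smult_neq)
  qed
qed

lemma LabelV_in_Y:
  assumes "u \<in> core_vertices"
  shows "LabelV (Vx u) (sc (vertex_labels_in \<mu> Y u)) \<in> Y"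
proof (cases "\<mu> u")
  case None
  then show ?thesis
    using fire_rule[OF PD_LabelV_choice[where v = "Vx u"]] assms core_vertices_vertex VertexMIC_in_Y
    unfolding vertex_labels_in_def by auto
next
  case (Some s)
  then show ?thesis
    using fire_rule[OF PD_LabelV_observed[where v = "Vx u" and s = "sc s"]] assms core_vertices_vertex
      facts_in_Y(4) unfolding vertex_labels_in_def by simp
qed

lemma LabelE_in_Y:
  assumes "(u, v) \<in> E" and "v \<in> W"
  shows "LabelE (Vx u) (Vx v) (sc (edge_labels_in \<sigma> Y (u, v))) \<in> Y"
proof (cases "\<sigma> (u, v)")
  case None
  then show ?thesis
    using fire_rule[OF PD_LabelE_choice[where u = "Vx u" and v = "Vx v"]] assms edge_vertices[of u v]
      EdgeMIC_in_Y unfolding edge_labels_in_def by auto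
next
  case (Some s)
  then show ?thesis
    using fire_rule[OF PD_LabelE_observed[where u = "Vx u" and v = "Vx v" and s = "sc s"]]
      edge_vertices[OF assms(1)] facts_in_Y(3) unfolding edge_labels_in_def by simp
qed

lemma Opposite_in_Y:
  fixes \<mu>' \<sigma>'
  defines "\<mu>' \<equiv> vertex_labels_in \<mu> Y" and "\<sigma>' \<equiv> edge_labels_in \<sigma> Y"
  assumes edge: "(j, i) \<in> E" and "i \<in> W" and opposite: "\<mu>' i \<noteq> smult (\<mu>' j) (\<sigma>' (j, i))"
  shows "Opposite (Vx j) (Vx i) \<in> Y"
proof -
  have labels: "LabelV (Vx j) (sc (\<mu>' j)) \<in> Y" "LabelV (Vx i) (sc (\<mu>' i)) \<in> Y"
    "LabelE (Vx j) (Vx i) (sc (\<sigma>' (j, i))) \<in> Y"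
    using LabelV_in_Y LabelE_in_Y core_vertices_memI edge \<open>i \<in> W\<close> unfolding \<mu>'_def \<sigma>'_def
    by blast+
  have vertices: "j \<in> V" "i \<in> V"
    using edge_vertices[OF edge] by simp_all
  show ?thesis
  proof (cases "\<sigma>' (j, i)")
    case Pos
    then show ?thesis
      using fire_rule[OF PD_Opposite_plus[where u = "Vx j" and v = "Vx i" and s = "sc (\<mu>' j)"
            and t = "sc (\<mu>' i)"]] opposite vertices labels by auto
  next
    case Neg
    then show ?thesis
      using fire_rule[OF PD_Opposite_minus[where u = "Vx j" and v = "Vx i" and s = "sc (\<mu>' j)"]]
        opposite vertices labels by (cases "\<mu>' j") auto
  qed
qed

lemma Bottom_in_Y: "Bottom \<in> Y"
proof -
  obtain i where "i \<in> W" and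
    "\<not> consistent E (edge_labels_in \<sigma> Y) (vertex_labels_in \<mu> Y) i"
    using core_inconsistent[OF extendsE_edge_labels_in extendsV_vertex_labels_in] by blast
  then have "Opposite (Vx j) (Vx i) \<in> Y" if "(j, i) \<in> E" for j
    using Opposite_in_Y that unfolding consistent_def by blast
  then have "insert (Active (Vx i)) {Opposite u (Vx i) | u. Edge u (Vx i) \<in> tau_facts V E \<sigma> I \<mu>} \<subseteq> Y"
    using Active_in_Y[OF \<open>i \<in> W\<close>] unfolding tau_facts_Edge_iff by auto
  then show ?thesis
    using fire_rule[OF PD_Bottom[where v = "Vx i"]] core_vertex[OF \<open>i \<in> W\<close>] by simp
qed

lemma core_answer_subset_Y: "core_answer \<subseteq> Y"
proof -
  have LabelV: "LabelV (Vx v) c \<in> Y" if "v \<in> V" "c \<in> {CPlus, CMinus}" for v c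
    using fire_rule[OF PD_LabelV_saturate[where v = "Vx v" and s = c]] that Bottom_in_Y facts_in_Y(1)
    by simp
  have LabelE: "LabelE (Vx u) (Vx v) c \<in> Y" if "(u, v) \<in> E" "c \<in> {CPlus, CMinus}" for u v c
    using fire_rule[OF PD_LabelE_saturate[where u = "Vx u" and v = "Vx v" and s = c]] that
      edge_vertices[OF that(1)] Bottom_in_Y facts_in_Y(2) by simp
  have Opposite: "Opposite (Vx u) (Vx v) \<in> Y" if "(u, v) \<in> E" for u v
    using fire_rule[OF PD_Opposite_minus[where u = "Vx u" and v = "Vx v" and s = CPlus]] that
      edge_vertices[OF that] LabelV LabelE by simp
  show ?thesis
    unfolding core_answer_def
    using tau_facts_in_Y Active_in_Y Inactive_in_Y EdgeMIC_in_Y VertexMIC_in_Y Bottom_in_Y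
      LabelV LabelE Opposite LabelV'_in_Y LabelE'_in_Y Receive'_in_Y
    by auto
qed

end

lemma answer_set_core_answer: "answer_set (program V E \<sigma> I \<mu>) core_answer"
  using core_answer_model core_answer_subset_Y by (rule answer_setI)

end

theorem theorem4:
  fixes V :: "'v set" and E :: "('v \<times> 'v) set" and \<sigma> :: "'v \<times> 'v \<Rightarrow> sign option"
    and I :: "'v set" and \<mu> :: "'v \<Rightarrow> sign option" and W :: "'v set"
  assumes "influence_graph V E \<sigma> I"
    and "vertex_labeling V \<mu>"
    and "is_MIC V E \<sigma> I \<mu> W"
  shows "\<exists>X. answer_set (program V E \<sigma> I \<mu>) X \<and> {c. Active c \<in> X} = Vx ` W"
proof -
  obtain \<sigma>w \<mu>w where witnesses: "\<forall>w\<in>W. extendsE E \<sigma> (\<sigma>w w) \<and> extendsV V \<mu> (\<mu>w w) \<and>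
      (\<forall>i\<in>W - {w}. consistent E (\<sigma>w w) (\<mu>w w) i)"
    using is_MIC_witnesses[OF assms(3)] by blast
  interpret witnessed_core V E \<sigma> I \<mu> W \<sigma>w \<mu>w
  proof
    show "W \<subseteq> V"
      using assms(3) unfolding is_MIC_def by blast
    show "\<And>i. i \<in> W \<Longrightarrow> i \<notin> I"
      using is_MIC_not_input[OF assms(3)] .
    show "\<And>\<sigma>' \<mu>'. extendsE E \<sigma> \<sigma>' \<Longrightarrow> extendsV V \<mu> \<mu>' \<Longrightarrow> \<exists>i\<in>W. \<not> consistent E \<sigma>' \<mu>' i"
      using is_MIC_inconsistentD[OF assms(3)] by blast
  qed (use assms(1,2) witnesses in auto)
  show ?thesis
    using answer_set_core_answer Active_core_answer by blast
qed

end
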